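(* For any $\alpha > 1$ and $x \geq 0$, \[ \overline{K}_\alpha(x) \geq (\alpha - 1)\,\overline{K}_{\alpha-1}(x). \]
   Context: $K_\alpha(x) := \int_0^\infty e^{-x\cosh t}\cosh(\alpha t)\,{\rm d}t$ for $\alpha\in\mathbb{R}$, $x > 0$; $\overline{K}_\alpha(x) := 2^{1-\alpha}x^\alpha K_\alpha(x)$ for $x>0$, and $\overline{K}_\alpha(0) := \Gamma(\alpha)$ for $\alpha > 0$. *)

theory Defs
  imports "HOL-Analysis.Analysis"
begin

definition besselK :: "real \<Rightarrow> real \<Rightarrow> real" where
  "besselK \<alpha> x = integral {0..} (\<lambda>t. exp (- x * cosh t) * cosh (\<alpha> * t))"

definition besselK_bar :: "real \<Rightarrow> real \<Rightarrow> real" where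
  "besselK_bar \<alpha> x =
     (if x = 0 then Gamma \<alpha> else 2 powr (1 - \<alpha>) * x powr \<alpha> * besselK \<alpha> x)"

end

theory Submission
  imports Defs "HOL-Real_Asymp.Real_Asymp"
begin

text \<open>Integrating the derivative of \<open>exp (- x cosh t) sinh (\<nu> t)\<close> over \<open>[0, \<infinity>)\<close> and using
  \<open>cosh ((\<nu> + 1) t) - cosh ((\<nu> - 1) t) = 2 sinh (\<nu> t) sinh t\<close> gives the classical recurrence
  \<open>x K(\<nu> + 1, x) = 2 \<nu> K(\<nu>, x) + x K(\<nu> - 1, x)\<close> for \<open>x > 0\<close>; the boundary terms vanish because
  \<open>sinh 0 = 0\<close> and the integrand decays superexponentially. For the normalised functions it reads
  \<open>Kbar(\<nu> + 1, x) = \<nu> Kbar(\<nu>, x) + x\<^sup>2/4 Kbar(\<nu> - 1, x)\<close>, which at \<open>x = 0\<close> is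
  \<open>\<Gamma>(\<nu> + 1) = \<nu> \<Gamma>(\<nu>)\<close>. As \<open>K\<close> is nonnegative, dropping the last term for \<open>\<nu> = \<alpha> - 1\<close> gives the
  inequality.\<close>

definition besselK_integrand :: "real \<Rightarrow> real \<Rightarrow> real \<Rightarrow> real" where
  "besselK_integrand \<nu> x = (\<lambda>t. exp (- x * cosh t) * cosh (\<nu> * t))"

lemma besselK_eq_integral: "besselK \<nu> x = integral {0..} (besselK_integrand \<nu> x)"
  by (simp add: besselK_def besselK_integrand_def)

lemma besselK_integrand_nonneg: "0 \<le> besselK_integrand \<nu> x t"
  by (simp add: besselK_integrand_def)

lemma cosh_le_exp_abs: "cosh (t::real) \<le> exp \<bar>t\<bar>"
  using cosh_plus_sinh[of "\<bar>t\<bar>"] cosh_real_abs[of t] sinh_le_cosh_real[of "- \<bar>t\<bar>"]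
  by (simp add: cosh_minus_sinh)

lemma power2_div4_le_cosh: "t\<^sup>2 / 4 \<le> cosh (t::real)"
proof -
  have "t\<^sup>2 / 2 \<le> exp \<bar>t\<bar>"
    using exp_lower_Taylor_quadratic[of "\<bar>t\<bar>"] by simp
  also have "exp \<bar>t\<bar> \<le> 2 * cosh t"
    using cosh_plus_sinh[of "\<bar>t\<bar>"] sinh_le_cosh_real[of "\<bar>t\<bar>"] by simp
  finally show ?thesis by simp
qed

lemma besselK_integrand_le:
  fixes x \<nu> t :: real
  assumes x: "x > 0" and t: "t \<ge> 0"
  shows "besselK_integrand \<nu> x t \<le> exp ((\<bar>\<nu>\<bar> + 1)\<^sup>2 / x) * exp (- t)"
proof -
  define c where "c = \<bar>\<nu>\<bar> + 1"
  have "(c - x * t / 2)\<^sup>2 / x \<ge> 0"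
    using x by simp
  then have quadratic: "c * t - x * t\<^sup>2 / 4 \<le> c\<^sup>2 / x"
    using x by (simp add: power2_eq_square field_simps)
  have "besselK_integrand \<nu> x t \<le> exp (- x * t\<^sup>2 / 4) * exp (\<bar>\<nu>\<bar> * t)"
    unfolding besselK_integrand_def
  proof (intro mult_mono)
    show "exp (- x * cosh t) \<le> exp (- x * t\<^sup>2 / 4)"
      using power2_div4_le_cosh[of t] x by simp
    show "cosh (\<nu> * t) \<le> exp (\<bar>\<nu>\<bar> * t)"
      using cosh_le_exp_abs[of "\<nu> * t"] t by (simp add: abs_mult)
  qed simp_all
  also have "\<dots> = exp (c * t - x * t\<^sup>2 / 4) * exp (- t)"
    by (simp add: c_def algebra_simps flip: exp_add)
  also have "\<dots> \<le> exp (c\<^sup>2 / x) * exp (- t)"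
    using quadratic by simp
  finally show ?thesis
    unfolding c_def .
qed

lemma besselK_integrand_integrable:
  assumes "x > 0"
  shows "besselK_integrand \<nu> x integrable_on {0..}"
proof -
  have "besselK_integrand \<nu> x absolutely_integrable_on {0..}"
  proof (rule measurable_bounded_by_integrable_imp_absolutely_integrable)
    show "besselK_integrand \<nu> x \<in> borel_measurable (lebesgue_on {0..})"
      unfolding besselK_integrand_def
      by (intro continuous_imp_measurable_on_sets_lebesgue continuous_intros) auto
    show "(\<lambda>t. exp ((\<bar>\<nu>\<bar> + 1)\<^sup>2 / x) * exp (- t)) integrable_on {0..}"
      using integrable_on_exp_minus_to_infinity[of 1 0] by (intro integrable_on_mult_right) simp
    show "norm (besselK_integrand \<nu> x t) \<le> exp ((\<bar>\<nu>\<bar> + 1)\<^sup>2 / x) * exp (- t)"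
      if "t \<in> {0..}" for t
      using besselK_integrand_le[OF assms] besselK_integrand_nonneg that by simp
  qed auto
  then show ?thesis
    by (simp add: absolutely_integrable_on_def)
qed

lemma besselK_nonneg: "0 \<le> besselK \<nu> x"
  unfolding besselK_eq_integral
  by (cases "besselK_integrand \<nu> x integrable_on {0..}")
     (simp_all add: Henstock_Kurzweil_Integration.integral_nonneg besselK_integrand_nonneg
        not_integrable_integral)

lemma integral_Icc_tendsto_integral_Ici:
  fixes f :: "real \<Rightarrow> 'b::euclidean_space"
  assumes f: "f absolutely_integrable_on {a..}"
  shows "(\<lambda>n. integral {a..real n} f) \<longlonglongrightarrow> integral {a..} f"
proof -
  define f' where "f' n t = (if t \<in> {a..real n} then f t else 0)" for n t
  have "f integrable_on {a..real n}" for n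
    using f by (intro integrable_on_subinterval) (auto simp: absolutely_integrable_on_def)
  then have truncated: "(f' n has_integral integral {a..real n} f) {a..}" for n
    unfolding f'_def by (subst has_integral_restrict) auto
  have "(\<lambda>n. integral {a..} (f' n)) \<longlonglongrightarrow> integral {a..} f"
  proof (rule dominated_convergence(2))
    show "f' n integrable_on {a..}" for n
      using truncated by blast
    show "(\<lambda>t. norm (f t)) integrable_on {a..}"
      using f by (simp add: absolutely_integrable_on_def)
    show "norm (f' n t) \<le> norm (f t)" for n t
      by (simp add: f'_def)
    show "(\<lambda>n. f' n t) \<longlonglongrightarrow> f t" if "t \<in> {a..}" for t
    proof (rule tendsto_eventually)
      have "\<forall>\<^sub>F n in sequentially. t \<le> real n"
        by (meson eventually_sequentiallyI nat_ceiling_le_eq)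
      with that show "\<forall>\<^sub>F n in sequentially. f' n t = f t"
        by (simp add: eventually_mono f'_def)
    qed
  qed
  moreover have "integral {a..} (f' n) = integral {a..real n} f" for n
    using truncated by (rule integral_unique)
  ultimately show ?thesis
    by simp
qed

lemma has_integral_Ici_fundamental_theorem:
  fixes f F :: "real \<Rightarrow> 'b::euclidean_space"
  assumes f: "f absolutely_integrable_on {a..}"
    and deriv: "\<And>t. t \<ge> a \<Longrightarrow> (F has_vector_derivative f t) (at t within {a..})"
    and lim: "(F \<longlongrightarrow> l) at_top"
  shows "(f has_integral l - F a) {a..}"
proof -
  have "\<forall>\<^sub>F n in sequentially. F (real n) - F a = integral {a..real n} f"
  proof (rule eventually_mono[OF eventually_ge_at_top[of "nat \<lceil>a\<rceil>"]])
    fix n assume "nat \<lceil>a\<rceil> \<le> n"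
    then have "a \<le> real n"
      by linarith
    moreover have "(F has_vector_derivative f t) (at t within {a..real n})" if "t \<in> {a..real n}" for t
      using deriv[of t] that by (auto intro: has_vector_derivative_within_subset)
    ultimately show "F (real n) - F a = integral {a..real n} f"
      by (intro integral_unique[symmetric] fundamental_theorem_of_calculus)
  qed
  moreover have "(\<lambda>n. F (real n) - F a) \<longlonglongrightarrow> l - F a"
    using filterlim_compose[OF lim filterlim_real_sequentially] by (intro tendsto_diff) auto
  ultimately have "(\<lambda>n. integral {a..real n} f) \<longlonglongrightarrow> l - F a"
    by (rule Lim_transform_eventually[rotated])
  then have "integral {a..} f = l - F a"
    using integral_Icc_tendsto_integral_Ici[OF f] LIMSEQ_unique by blast
  moreover have "f integrable_on {a..}"
    using f by (simp add: absolutely_integrable_on_def)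
  ultimately show ?thesis
    by (simp add: has_integral_iff)
qed

lemma exp_neg_cosh_mult_sinh_has_derivative:
  "((\<lambda>t. exp (- x * cosh t) * sinh (\<nu> * t)) has_real_derivative
      \<nu> * besselK_integrand \<nu> x t
      - x / 2 * (besselK_integrand (\<nu> + 1) x t - besselK_integrand (\<nu> - 1) x t)) (at t)"
proof -
  have "cosh ((\<nu> + 1) * t) - cosh ((\<nu> - 1) * t) = 2 * sinh (\<nu> * t) * sinh t"
    by (simp add: ring_distribs cosh_add cosh_diff)
  then have "\<nu> * besselK_integrand \<nu> x t
      - x / 2 * (besselK_integrand (\<nu> + 1) x t - besselK_integrand (\<nu> - 1) x t)
    = exp (- x * cosh t) * (- x * sinh t) * sinh (\<nu> * t) + exp (- x * cosh t) * (cosh (\<nu> * t) * \<nu>)"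
    unfolding besselK_integrand_def by (simp add: algebra_simps flip: right_diff_distrib)
  then show ?thesis
    by (auto intro!: derivative_eq_intros)
qed

lemma exp_neg_cosh_mult_sinh_tendsto_0:
  fixes x \<nu> :: real
  assumes x: "x > 0"
  shows "((\<lambda>t. exp (- x * cosh t) * sinh (\<nu> * t)) \<longlongrightarrow> 0) at_top"
proof (rule Lim_null_comparison)
  define M where "M = exp ((\<bar>\<nu>\<bar> + 1)\<^sup>2 / x)"
  show "\<forall>\<^sub>F t in at_top. norm (exp (- x * cosh t) * sinh (\<nu> * t)) \<le> M * exp (- t)"
  proof (rule eventually_mono[OF eventually_ge_at_top[of 0]])
    fix t :: real assume t: "t \<ge> 0"
    have "\<bar>sinh (\<nu> * t)\<bar> \<le> cosh (\<nu> * t)"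
      using sinh_le_cosh_real[of "\<nu> * t"] sinh_le_cosh_real[of "- \<nu> * t"] by simp
    then have "norm (exp (- x * cosh t) * sinh (\<nu> * t)) \<le> besselK_integrand \<nu> x t"
      by (simp add: besselK_integrand_def abs_mult)
    also have "\<dots> \<le> M * exp (- t)"
      unfolding M_def using besselK_integrand_le[OF x t] .
    finally show "norm (exp (- x * cosh t) * sinh (\<nu> * t)) \<le> M * exp (- t)" .
  qed
  show "((\<lambda>t. M * exp (- t)) \<longlongrightarrow> 0) at_top"
    by real_asymp
qed

theorem besselK_recurrence:
  assumes x: "x > 0"
  shows "x * besselK (\<nu> + 1) x = 2 * \<nu> * besselK \<nu> x + x * besselK (\<nu> - 1) x"
proof -
  define F where "F = (\<lambda>t. exp (- x * cosh t) * sinh (\<nu> * t))"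
  define D where "D = (\<lambda>t. \<nu> * besselK_integrand \<nu> x t
      - x / 2 * (besselK_integrand (\<nu> + 1) x t - besselK_integrand (\<nu> - 1) x t))"
  have abs_int: "besselK_integrand \<beta> x absolutely_integrable_on {0..}" for \<beta>
    using besselK_integrand_integrable[OF x]
    by (rule nonnegative_absolutely_integrable_1) (simp add: besselK_integrand_nonneg)
  have "(D has_integral \<nu> * besselK \<nu> x - x / 2 * (besselK (\<nu> + 1) x - besselK (\<nu> - 1) x)) {0..}"
    unfolding D_def besselK_eq_integral
    by (intro has_integral_diff has_integral_mult_right integrable_integral
        besselK_integrand_integrable x)
  moreover have "(D has_integral 0 - F 0) {0..}"
  proof (rule has_integral_Ici_fundamental_theorem)
    show "D absolutely_integrable_on {0..}"
      unfolding D_def by (intro set_integral_diff(1) set_integrable_mult_right abs_int)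
    show "(F has_vector_derivative D t) (at t within {0..})" for t
      unfolding D_def F_def has_real_derivative_iff_has_vector_derivative[symmetric]
      by (rule has_field_derivative_at_within[OF exp_neg_cosh_mult_sinh_has_derivative])
    show "(F \<longlongrightarrow> 0) at_top"
      unfolding F_def by (rule exp_neg_cosh_mult_sinh_tendsto_0[OF x])
  qed
  ultimately have "\<nu> * besselK \<nu> x - x / 2 * (besselK (\<nu> + 1) x - besselK (\<nu> - 1) x) = 0 - F 0"
    by (rule has_integral_unique)
  then show ?thesis
    by (simp add: F_def algebra_simps)
qed

lemma besselK_bar_nonneg: "x > 0 \<Longrightarrow> 0 \<le> besselK_bar \<nu> x"
  by (simp add: besselK_bar_def besselK_nonneg)

lemma besselK_bar_recurrence:
  assumes \<nu>: "\<nu> > 0" and x: "x \<ge> 0"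
  shows "besselK_bar (\<nu> + 1) x = \<nu> * besselK_bar \<nu> x + x\<^sup>2 / 4 * besselK_bar (\<nu> - 1) x"
proof (cases "x = 0")
  case True
  have "\<nu> \<notin> \<int>\<^sub>\<le>\<^sub>0"
    using \<nu> nonpos_Ints_nonpos by fastforce
  then show ?thesis
    using True by (simp add: besselK_bar_def Gamma_plus1)
next
  case False
  with x have x: "x > 0"
    by simp
  define P where "P = 2 powr (- \<nu>) * x powr \<nu>"
  have "2 powr (1 - (\<nu> + 1)) * x powr (\<nu> + 1) = P * x"
    using x by (simp add: P_def powr_add)
  moreover have "2 powr (1 - \<nu>) * x powr \<nu> = 2 * P"
    by (simp add: P_def powr_diff powr_minus divide_inverse)
  moreover have "2 powr (1 - (\<nu> - 1)) * x powr (\<nu> - 1) = 4 * P / x"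
    using x by (simp add: P_def powr_diff powr_minus divide_inverse)
  ultimately show ?thesis
    using x besselK_recurrence[OF x, of \<nu>]
    by (simp add: besselK_bar_def power2_eq_square algebra_simps)
qed

theorem lemma3p1:
  fixes \<alpha> x :: real
  assumes "\<alpha> > 1" and "x \<ge> 0"
  shows "besselK_bar \<alpha> x \<ge> (\<alpha> - 1) * besselK_bar (\<alpha> - 1) x"
proof -
  have "besselK_bar \<alpha> x = (\<alpha> - 1) * besselK_bar (\<alpha> - 1) x + x\<^sup>2 / 4 * besselK_bar (\<alpha> - 2) x"
    using besselK_bar_recurrence[of "\<alpha> - 1" x] assms by simp
  moreover have "0 \<le> x\<^sup>2 / 4 * besselK_bar (\<alpha> - 2) x"
    using assms(2) besselK_bar_nonneg[of x "\<alpha> - 2"] by (cases "x = 0") simp_all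
  ultimately show ?thesis
    by simp
qed

end
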